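(* For every convex set $\mathcal{H}\subseteq\Delta_n$ and every $\varepsilon>0$, there is a strategy for the player that wins the $(\mathcal{H},\varepsilon)$-cutting-with-margin game in $O(\log(n)/\varepsilon^2)$ rounds.
   Context: $\Delta_n=\{h\in\mathbb{R}^n:\sum_i h_i=1,\ h_i\ge0\}$ and $B_1(h,r)=\{v\in\mathbb{R}^n:\|v-h\|_1\le r\}$. The $(\mathcal{H},\varepsilon)$-cutting-with-margin game is played between a player and an adversary who both know $\mathcal{H}$ and $\varepsilon$: start with $\mathcal{H}_0=\mathcal{H}$, $k=0$. While $\mathcal{H}_k\ne\emptyset$: the player picks a point $h_k\in\mathcal{H}_k$ (possibly depending on the history); the adversary picks any convex set $\mathcal{H}_{k+1}\subseteq\mathcal{H}_k$ with $\mathcal{H}_{k+1}\cap B_1(h_k,\varepsilon)=\emptyset$; increment $k$. A player strategy wins in at most $r$ rounds if for every sequence $\mathcal{H}=\mathcal{H}_0\supseteq\mathcal{H}_1\supseteq\cdots\supseteq\mathcal{H}_t$ of legal adversary moves against it, $\mathcal{H}_t\ne\emptyset$ implies $t<r$. *)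

theory Defs
  imports "HOL-Analysis.Analysis"
begin

text \<open>Points of R^n are represented as functions nat => real; only coordinates 0..n-1
  matter. Points of the prob_simplex are required to vanish outside {..<n}.\<close>

definition prob_simplex :: "nat \<Rightarrow> (nat \<Rightarrow> real) set" where
  "prob_simplex n = {h. (\<forall>i<n. 0 \<le> h i) \<and> (\<Sum>i<n. h i) = 1 \<and> (\<forall>i\<ge>n. h i = 0)}"

definition l1_ball :: "nat \<Rightarrow> (nat \<Rightarrow> real) \<Rightarrow> real \<Rightarrow> (nat \<Rightarrow> real) set" where
  "l1_ball n h r = {v. (\<forall>i\<ge>n. v i = 0) \<and> (\<Sum>i<n. \<bar>v i - h i\<bar>) \<le> r}"

definition convex_fun_set :: "(nat \<Rightarrow> real) set \<Rightarrow> bool" where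
  "convex_fun_set S \<longleftrightarrow>
     (\<forall>x\<in>S. \<forall>y\<in>S. \<forall>u::real. 0 \<le> u \<and> u \<le> 1 \<longrightarrow> (\<lambda>i. u * x i + (1 - u) * y i) \<in> S)"

text \<open>A player strategy maps the history of sets H_0,...,H_k (a nonempty list) to the
  next point h_k.\<close>

type_synonym strategy = "(nat \<Rightarrow> real) set list \<Rightarrow> (nat \<Rightarrow> real)"

definition legal_play ::
  "nat \<Rightarrow> (nat \<Rightarrow> real) set \<Rightarrow> real \<Rightarrow> strategy \<Rightarrow> (nat \<Rightarrow> real) set list \<Rightarrow> bool" where
  "legal_play n H eps \<sigma> Hs \<longleftrightarrow> Hs \<noteq> [] \<and> Hs ! 0 = H \<and>
     (\<forall>k. Suc k < length Hs \<longrightarrow>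
        Hs ! k \<noteq> {} \<and> convex_fun_set (Hs ! Suc k) \<and> Hs ! Suc k \<subseteq> Hs ! k \<and>
        Hs ! Suc k \<inter> l1_ball n (\<sigma> (take (Suc k) Hs)) eps = {})"

definition wins_within ::
  "nat \<Rightarrow> (nat \<Rightarrow> real) set \<Rightarrow> real \<Rightarrow> strategy \<Rightarrow> real \<Rightarrow> bool" where
  "wins_within n H eps \<sigma> r \<longleftrightarrow>
     (\<forall>Hs. legal_play n H eps \<sigma> Hs \<and> last Hs \<noteq> {} \<longrightarrow>
        \<sigma> Hs \<in> last Hs \<and> real (length Hs - 1) < r)"

end

theory Submission
  imports Defs
begin

text \<open>The player uses the negative entropy \<open>\<Phi>(h) = \<Sum> h\<^sub>i ln h\<^sub>i\<close> as a potential, which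
  takes values in \<open>[-ln n, 0]\<close> on the simplex, and always plays a point of the current set
  whose potential is within \<open>\<delta> = \<epsilon>\<^sup>2/8\<close> of the infimum. If the adversary keeps a point
  \<open>h\<close> at \<open>\<ell>\<^sub>1\<close>-distance more than \<open>\<epsilon>\<close> from the played point \<open>p\<close>, then the midpoint of \<open>h\<close> and
  \<open>p\<close> still lies in the old set, and the strong convexity estimate
  \<open>\<parallel>h - p\<parallel>\<^sub>1\<^sup>2 \<le> 4 (\<Phi>(h) + \<Phi>(p) - 2 \<Phi>((h + p)/2))\<close> forces \<open>\<Phi>(h)\<close> to exceed the old
  infimum by at least \<open>\<delta>\<close>. Hence the infimum grows by \<open>\<delta>\<close> per round, and the game lasts at
  most \<open>8 ln n / \<epsilon>\<^sup>2\<close> rounds.\<close>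

lemma two_mult_le_ln_one_plus_minus_ln_one_minus:
  fixes t :: real
  assumes "0 \<le> t" "t < 1"
  shows "2 * t \<le> ln (1 + t) - ln (1 - t)"
proof -
  let ?f = "\<lambda>t::real. ln (1 + t) - ln (1 - t) - 2 * t"
  have "?f 0 \<le> ?f t"
  proof (rule DERIV_nonneg_imp_nondecreasing[OF assms(1)])
    fix x :: real
    assume x: "0 \<le> x" "x \<le> t"
    then have pos: "0 < 1 - x" "0 < 1 + x"
      using assms by auto
    have "DERIV ?f x :> 1 / (1 + x) + 1 / (1 - x) - 2"
      using pos by (auto intro!: derivative_eq_intros)
    moreover have "0 \<le> 1 / (1 + x) + 1 / (1 - x) - 2"
    proof -
      have "x\<^sup>2 < 1"
        using x pos by (simp add: abs_square_less_1)
      then show ?thesis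
        using pos by (simp add: field_simps power2_eq_square le_divide_eq)
    qed
    ultimately show "\<exists>y. DERIV ?f x :> y \<and> 0 \<le> y"
      by blast
  qed
  then show ?thesis
    by simp
qed

lemma power2_le_xlnx_one_plus_one_minus:
  fixes t :: real
  assumes "0 \<le> t" "t < 1"
  shows "t\<^sup>2 \<le> (1 + t) * ln (1 + t) + (1 - t) * ln (1 - t)"
proof -
  let ?f = "\<lambda>t::real. (1 + t) * ln (1 + t) + (1 - t) * ln (1 - t) - t\<^sup>2"
  have "?f 0 \<le> ?f t"
  proof (rule DERIV_nonneg_imp_nondecreasing[OF assms(1)])
    fix x :: real
    assume x: "0 \<le> x" "x \<le> t"
    then have pos: "0 < 1 - x" "0 < 1 + x"
      using assms by auto
    have "DERIV ?f x :> ln (1 + x) - ln (1 - x) - 2 * x"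
      by (rule derivative_eq_intros refl | use pos in simp)+
    moreover have "0 \<le> ln (1 + x) - ln (1 - x) - 2 * x"
      using two_mult_le_ln_one_plus_minus_ln_one_minus x assms by simp
    ultimately show "\<exists>y. DERIV ?f x :> y \<and> 0 \<le> y"
      by blast
  qed
  then show ?thesis
    by simp
qed

lemma diff_sq_div_sum_le_xlnx_jensen_gap:
  fixes a b :: real
  assumes "0 \<le> a" "0 \<le> b"
  shows "(a - b)\<^sup>2 / (a + b) \<le> 2 * (a * ln a + b * ln b - (a + b) * ln ((a + b) / 2))"
  using assms
proof (induction b a rule: linorder_wlog)
  case (sym a b)
  then show ?case
    by (simp add: add.commute power2_commute)
next
  case (le b a)
  show ?case
  proof (cases "b = 0")
    case True
    have "a * (1 / 2) \<le> a * ln 2"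
      using ln2_ge_two_thirds \<open>0 \<le> a\<close> by (intro mult_left_mono) auto
    then show ?thesis
      using True \<open>0 \<le> a\<close> by (cases "a = 0") (simp_all add: ln_div power2_eq_square algebra_simps)
  next
    case False
    define m where "m = (a + b) / 2"
    define t where "t = (a - b) / (a + b)"
    have "0 < b" "0 < m"
      using False le by (auto simp: m_def)
    have t: "0 \<le> t" "t < 1"
      using le \<open>0 < b\<close> by (auto simp: t_def field_simps)
    have a: "a = m * (1 + t)" and b: "b = m * (1 - t)"
      using \<open>0 < b\<close> le by (auto simp: m_def t_def field_simps)
    have "ln a = ln m + ln (1 + t)" "ln b = ln m + ln (1 - t)"
      using \<open>0 < m\<close> t by (simp_all add: a b ln_mult)
    then have "a * ln a + b * ln b - (a + b) * ln ((a + b) / 2)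
        = a * (ln m + ln (1 + t)) + b * (ln m + ln (1 - t)) - 2 * m * ln m"
      by (simp add: m_def)
    also have "\<dots> = m * ((1 + t) * ln (1 + t) + (1 - t) * ln (1 - t))"
      unfolding a b by (simp add: algebra_simps)
    moreover have "(a - b)\<^sup>2 / (a + b) = 2 * (m * t\<^sup>2)"
      using \<open>0 < m\<close> by (simp add: a b field_simps power2_eq_square)
    ultimately show ?thesis
      using power2_le_xlnx_one_plus_one_minus[OF t] \<open>0 < m\<close> by simp
  qed
qed

definition neg_entropy :: "nat \<Rightarrow> (nat \<Rightarrow> real) \<Rightarrow> real" where
  "neg_entropy n h = (\<Sum>i<n. h i * ln (h i))"

lemma prob_simplex_nonneg: "h \<in> prob_simplex n \<Longrightarrow> i < n \<Longrightarrow> 0 \<le> h i"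
  by (simp add: prob_simplex_def)

lemma prob_simplex_le_one:
  assumes "h \<in> prob_simplex n" "i < n"
  shows "h i \<le> 1"
proof -
  have "h i \<le> (\<Sum>j<n. h j)"
    using assms by (intro member_le_sum) (auto simp: prob_simplex_def)
  then show ?thesis
    using assms by (simp add: prob_simplex_def)
qed

lemma prob_simplex_dim_pos: "h \<in> prob_simplex n \<Longrightarrow> 0 < n"
  by (rule ccontr) (simp add: prob_simplex_def)

lemma neg_entropy_nonpos:
  assumes "h \<in> prob_simplex n"
  shows "neg_entropy n h \<le> 0"
  unfolding neg_entropy_def
proof (rule sum_nonpos)
  fix i
  assume "i \<in> {..<n}"
  then have "0 \<le> h i" "h i \<le> 1"
    using assms prob_simplex_nonneg prob_simplex_le_one by auto
  then show "h i * ln (h i) \<le> 0"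
    by (cases "h i = 0") (auto intro: mult_nonneg_nonpos)
qed

lemma neg_entropy_ge_minus_ln:
  assumes h: "h \<in> prob_simplex n"
  shows "- ln (real n) \<le> neg_entropy n h"
proof -
  have n: "0 < real n"
    using prob_simplex_dim_pos[OF h] by simp
  have sum_one: "(\<Sum>i<n. h i) = 1"
    using h by (simp add: prob_simplex_def)
  have "- h i * ln n - h i * ln (h i) \<le> 1 / n - h i" if "i < n" for i
  proof (cases "h i = 0")
    case False
    then have hi: "0 < h i"
      using prob_simplex_nonneg[OF h that] by simp
    have "ln (1 / (n * h i)) \<le> 1 / (n * h i) - 1"
      using hi n by (intro ln_le_minus_one) simp
    then have "h i * (- ln n - ln (h i)) \<le> h i * (1 / (n * h i) - 1)"
      using hi n by (intro mult_left_mono) (simp_all add: ln_div ln_mult)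
    then show ?thesis
      using hi n by (simp add: algebra_simps)
  qed simp
  then have "(\<Sum>i<n. - h i * ln n - h i * ln (h i)) \<le> (\<Sum>i<n. 1 / n - h i)"
    by (intro sum_mono) auto
  moreover have "(\<Sum>i<n. - h i * ln n - h i * ln (h i)) = - ln n - neg_entropy n h"
    using sum_one by (simp add: neg_entropy_def sum_subtractf sum_negf flip: sum_distrib_right)
  moreover have "(\<Sum>i<n. 1 / n - h i) = 0"
    using n sum_one by (simp add: sum_subtractf)
  ultimately show ?thesis
    by linarith
qed

lemma bdd_below_neg_entropy: "S \<subseteq> prob_simplex n \<Longrightarrow> bdd_below (neg_entropy n ` S)"
  unfolding bdd_below_def using neg_entropy_ge_minus_ln by blast

lemma l1_dist_sq_le_neg_entropy_jensen_gap:
  assumes x: "x \<in> prob_simplex n" and y: "y \<in> prob_simplex n"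
  shows "(\<Sum>i<n. \<bar>x i - y i\<bar>)\<^sup>2
    \<le> 4 * (neg_entropy n x + neg_entropy n y - 2 * neg_entropy n (\<lambda>i. (x i + y i) / 2))"
proof -
  define f where "f i = \<bar>x i - y i\<bar> / sqrt (x i + y i)" for i
  define g where "g i = sqrt (x i + y i)" for i
  have nonneg: "0 \<le> x i" "0 \<le> y i" if "i < n" for i
    using that x y prob_simplex_nonneg by auto
  have "f i * g i = \<bar>x i - y i\<bar>" if "i < n" for i
    using nonneg[OF that] by (cases "x i + y i = 0") (simp_all add: f_def g_def)
  then have "(\<Sum>i<n. \<bar>x i - y i\<bar>)\<^sup>2 = (\<Sum>i<n. f i * g i)\<^sup>2"
    by simp
  also have "\<dots> \<le> (\<Sum>i<n. (f i)\<^sup>2) * (\<Sum>i<n. (g i)\<^sup>2)"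
    by (rule Cauchy_Schwarz_ineq_sum)
  also have "(\<Sum>i<n. (g i)\<^sup>2) = 2"
    using nonneg x y by (simp add: g_def sum.distrib prob_simplex_def)
  also have "(\<Sum>i<n. (f i)\<^sup>2)
      \<le> (\<Sum>i<n. 2 * (x i * ln (x i) + y i * ln (y i) - (x i + y i) * ln ((x i + y i) / 2)))"
    using nonneg diff_sq_div_sum_le_xlnx_jensen_gap
    by (intro sum_mono) (simp add: f_def power_divide)
  also have "\<dots> = 2 * (\<Sum>i<n. x i * ln (x i) + y i * ln (y i)
      - 2 * ((x i + y i) / 2 * ln ((x i + y i) / 2)))"
    by (simp add: sum_distrib_left)
  also have "\<dots> = 2 * (neg_entropy n x + neg_entropy n y - 2 * neg_entropy n (\<lambda>i. (x i + y i) / 2))"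
    by (simp add: neg_entropy_def sum.distrib sum_subtractf sum_distrib_left)
  finally show ?thesis
    by simp
qed

lemma neg_entropy_outside_l1_ball_ge:
  assumes S: "S \<subseteq> prob_simplex n" "convex_fun_set S"
    and p: "p \<in> S" and h: "h \<in> S" "h \<notin> l1_ball n p eps" and "0 \<le> eps"
  shows "2 * Inf (neg_entropy n ` S) - neg_entropy n p + eps\<^sup>2 / 4 \<le> neg_entropy n h"
proof -
  have simplex: "h \<in> prob_simplex n" "p \<in> prob_simplex n"
    using S p h by auto
  then have "eps < (\<Sum>i<n. \<bar>h i - p i\<bar>)"
    using h by (auto simp: l1_ball_def prob_simplex_def)
  then have "eps\<^sup>2 \<le> (\<Sum>i<n. \<bar>h i - p i\<bar>)\<^sup>2"
    using \<open>0 \<le> eps\<close> by (intro power_mono) auto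
  also have "\<dots> \<le> 4 * (neg_entropy n h + neg_entropy n p
      - 2 * neg_entropy n (\<lambda>i. (h i + p i) / 2))"
    using l1_dist_sq_le_neg_entropy_jensen_gap[OF simplex] .
  finally have jensen: "eps\<^sup>2 \<le> \<dots>" .
  have "(\<lambda>i. (h i + p i) / 2) \<in> S"
    using convex_fun_set_def[THEN iffD1, OF S(2), rule_format, of h p "1 / 2"] h p
    by (simp add: add_divide_distrib)
  then have "Inf (neg_entropy n ` S) \<le> neg_entropy n (\<lambda>i. (h i + p i) / 2)"
    using bdd_below_neg_entropy[OF S(1)] by (intro cInf_lower) auto
  with jensen show ?thesis
    by simp
qed

definition near_minimizer_strategy :: "nat \<Rightarrow> real \<Rightarrow> strategy" where
  "near_minimizer_strategy n \<delta> Hs =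
     (SOME h. h \<in> last Hs \<and> neg_entropy n h \<le> Inf (neg_entropy n ` last Hs) + \<delta>)"

lemma near_minimizer_strategy_spec:
  assumes "last Hs \<subseteq> prob_simplex n" "last Hs \<noteq> {}" "0 < \<delta>"
  shows "near_minimizer_strategy n \<delta> Hs \<in> last Hs"
    and "neg_entropy n (near_minimizer_strategy n \<delta> Hs) \<le> Inf (neg_entropy n ` last Hs) + \<delta>"
proof -
  have "\<exists>h\<in>last Hs. neg_entropy n h < Inf (neg_entropy n ` last Hs) + \<delta>"
    using cInf_less_iff[of "neg_entropy n ` last Hs" "Inf (neg_entropy n ` last Hs) + \<delta>"]
      bdd_below_neg_entropy[OF assms(1)] assms(2,3)
    by simp
  then have "\<exists>h. h \<in> last Hs \<and> neg_entropy n h \<le> Inf (neg_entropy n ` last Hs) + \<delta>"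
    by (auto intro: less_imp_le)
  from someI_ex[OF this] show "near_minimizer_strategy n \<delta> Hs \<in> last Hs"
    and "neg_entropy n (near_minimizer_strategy n \<delta> Hs) \<le> Inf (neg_entropy n ` last Hs) + \<delta>"
    unfolding near_minimizer_strategy_def by blast+
qed

lemma legal_play_subset:
  assumes "legal_play n H eps \<sigma> Hs" "k < length Hs"
  shows "Hs ! k \<subseteq> H"
  using assms(2)
proof (induction k)
  case 0
  then show ?case
    using assms(1) by (simp add: legal_play_def)
next
  case (Suc k)
  then show ?case
    using assms(1) unfolding legal_play_def by force
qed

lemma legal_play_convex:
  assumes "legal_play n H eps \<sigma> Hs" "convex_fun_set H" "k < length Hs"
  shows "convex_fun_set (Hs ! k)"
  using assms by (cases k) (auto simp: legal_play_def)

lemma legal_play_neg_entropy_ge: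
  assumes H: "H \<subseteq> prob_simplex n" "convex_fun_set H" and "0 < eps"
    and play: "legal_play n H eps (near_minimizer_strategy n (eps\<^sup>2 / 8)) Hs"
    and k: "k < length Hs" and h: "h \<in> Hs ! k"
  shows "- ln (real n) + real k * eps\<^sup>2 / 8 \<le> neg_entropy n h"
  using k h
proof (induction k arbitrary: h)
  case 0
  then show ?case
    using H legal_play_subset[OF play] neg_entropy_ge_minus_ln by force
next
  case (Suc k)
  define S where "S = Hs ! k"
  define p where "p = near_minimizer_strategy n (eps\<^sup>2 / 8) (take (Suc k) Hs)"
  have k: "k < length Hs"
    using Suc.prems by simp
  have step: "S \<noteq> {}" "Hs ! Suc k \<subseteq> S" "Hs ! Suc k \<inter> l1_ball n p eps = {}"
    using play Suc.prems unfolding legal_play_def S_def p_def by blast+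
  have S: "S \<subseteq> prob_simplex n" "convex_fun_set S"
    using H legal_play_subset[OF play k] legal_play_convex[OF play H(2) k] by (auto simp: S_def)
  have last_take: "last (take (Suc k) Hs) = S"
    using k by (simp add: S_def take_Suc_conv_app_nth)
  have p: "p \<in> S" "neg_entropy n p \<le> Inf (neg_entropy n ` S) + eps\<^sup>2 / 8"
    using near_minimizer_strategy_spec[of "take (Suc k) Hs" n "eps\<^sup>2 / 8", unfolded last_take]
      S(1) step(1) \<open>0 < eps\<close>
    unfolding p_def by simp_all
  have h: "h \<in> S" "h \<notin> l1_ball n p eps"
    using Suc.prems(2) step(2,3) by auto
  have "- ln (real n) + real k * eps\<^sup>2 / 8 \<le> Inf (neg_entropy n ` S)"
    using Suc.IH k step(1) unfolding S_def by (intro cInf_greatest) auto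
  moreover have "2 * Inf (neg_entropy n ` S) - neg_entropy n p + eps\<^sup>2 / 4 \<le> neg_entropy n h"
    using neg_entropy_outside_l1_ball_ge[OF S p(1) h] \<open>0 < eps\<close> by simp
  moreover have "real (Suc k) * eps\<^sup>2 / 8 = real k * eps\<^sup>2 / 8 + eps\<^sup>2 / 8"
    by (simp add: algebra_simps)
  ultimately show ?case
    using p(2) by linarith
qed

lemma near_minimizer_strategy_wins:
  assumes H: "H \<subseteq> prob_simplex n" "convex_fun_set H" and eps: "0 < eps"
  shows "wins_within n H eps (near_minimizer_strategy n (eps\<^sup>2 / 8)) (9 * (1 + ln (real n) / eps\<^sup>2))"
  unfolding wins_within_def
proof (intro allI impI conjI)
  fix Hs
  assume play: "legal_play n H eps (near_minimizer_strategy n (eps\<^sup>2 / 8)) Hs \<and> last Hs \<noteq> {}"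
  define t where "t = length Hs - 1"
  have t: "t < length Hs" "last Hs = Hs ! t"
    using play by (auto simp: t_def legal_play_def last_conv_nth)
  have last: "last Hs \<subseteq> prob_simplex n"
    using legal_play_subset[OF conjunct1[OF play] t(1)] t(2) H(1) by simp
  then show "near_minimizer_strategy n (eps\<^sup>2 / 8) Hs \<in> last Hs"
    using near_minimizer_strategy_spec(1)[OF _ conjunct2[OF play]] eps by simp
  obtain h where h: "h \<in> last Hs"
    using play by auto
  have "- ln (real n) + real t * eps\<^sup>2 / 8 \<le> neg_entropy n h"
    using legal_play_neg_entropy_ge[OF H eps conjunct1[OF play] t(1)] h t(2) by simp
  moreover have "neg_entropy n h \<le> 0"
    using h last neg_entropy_nonpos by auto
  ultimately have "real t * eps\<^sup>2 \<le> 8 * ln (real n)"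
    by linarith
  then have "real t \<le> 8 * (ln (real n) / eps\<^sup>2)"
    using eps by (simp add: field_simps)
  moreover have "0 \<le> real t"
    by simp
  ultimately show "real (length Hs - 1) < 9 * (1 + ln (real n) / eps\<^sup>2)"
    unfolding t_def ring_distribs by linarith
qed

theorem theorem2:
  shows "\<exists>C>0. \<forall>n\<ge>1. \<forall>H eps. H \<subseteq> prob_simplex n \<and> convex_fun_set H \<and> eps > 0 \<longrightarrow>
           (\<exists>\<sigma>. wins_within n H eps \<sigma> (C * (1 + ln (real n) / eps\<^sup>2)))"
proof (intro exI[of _ 9] conjI allI impI)
  fix n H and eps :: real
  assume "H \<subseteq> prob_simplex n \<and> convex_fun_set H \<and> eps > 0"
  then show "\<exists>\<sigma>. wins_within n H eps \<sigma> (9 * (1 + ln (real n) / eps\<^sup>2))"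
    using near_minimizer_strategy_wins by blast
qed simp

end
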